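(* Let $A,B\in\mathrm{SL}_2\mathbb{Z}$ be noncommuting, well oriented, with $2\le\mathrm{tr}(A)<\mathrm{tr}(B)$. If $[ab]<[b^2]$, then $[ab^k]<[b^{k+1}]$ for every $k\ge1$.
   Context: Words are finite strings over $\{a,b\}$; $\phi$ is the homomorphism with $\phi(a)=A,\phi(b)=B$, and $[w]=\mathrm{tr}(\phi(w))$. Fixed points are for the Möbius action on $\partial\mathcal{H}=\mathbb{P}^1\mathbb{R}$; $\alpha^\pm$ ($\beta^\pm$) are the attracting/repelling fixed points of $A$ ($B$), both equal to the unique fixed point if parabolic. With $\partial\mathcal{H}$ cyclically ordered and $[\alpha,\beta]$ the closed counterclockwise interval from $\alpha$ to $\beta$, let $I^+=\{\alpha^+\}$ if $\alpha^+=\beta^+$, and otherwise the one of $[\alpha^+,\beta^+],[\beta^+,\alpha^+]$ mapped into itself by both $A$ and $B$ (if it exists); define $I^-$ likewise with $A^{-1},B^{-1},\alpha^-,\beta^-$. The pair is coherently oriented if both exist, and well oriented if $A,B$ is coherently oriented but $A,B^{-1}$ is not. *)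

theory Defs
  imports "HOL-Analysis.Analysis"
begin

definition SL2Z :: "(int^2^2) set" where
  "SL2Z = {A. det A = 1}"

datatype letter = La | Lb

definition phi :: "int^2^2 \<Rightarrow> int^2^2 \<Rightarrow> letter list \<Rightarrow> int^2^2" where
  "phi A B w = foldr (\<lambda>l M. (case l of La \<Rightarrow> A | Lb \<Rightarrow> B) ** M) w (mat 1)"

text \<open>[w] = tr(phi(w)).\<close>
definition wtr :: "int^2^2 \<Rightarrow> int^2^2 \<Rightarrow> letter list \<Rightarrow> int" where
  "wtr A B w = trace (phi A B w)"

text \<open>Inverse of a matrix of determinant 1 (adjugate).\<close>
definition sl2inv :: "int^2^2 \<Rightarrow> int^2^2" where
  "sl2inv A = (\<chi> i j. if i = 1 \<and> j = 1 then A$2$2 else if i = 2 \<and> j = 2 then A$1$1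
                       else - A$i$j)"

datatype rp1 = Fin real | Infty

text \<open>Point of P^1(R) represented by a nonzero vector (x,y), i.e. x/y.\<close>
definition pt :: "real^2 \<Rightarrow> rp1" where
  "pt v = (if v$2 = 0 then Infty else Fin (v$1 / v$2))"

definition realm :: "int^2^2 \<Rightarrow> real^2^2" where
  "realm A = (\<chi> i j. real_of_int (A$i$j))"

fun mob :: "int^2^2 \<Rightarrow> rp1 \<Rightarrow> rp1" where
  "mob A (Fin x) = (if real_of_int (A$2$1) * x + real_of_int (A$2$2) = 0 then Infty
      else Fin ((real_of_int (A$1$1) * x + real_of_int (A$1$2)) /
                (real_of_int (A$2$1) * x + real_of_int (A$2$2))))"
| "mob A Infty = (if A$2$1 = 0 then Infty
      else Fin (real_of_int (A$1$1) / real_of_int (A$2$1)))"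

text \<open>For hyperbolic A these are
  the attracting and repelling fixed points; for parabolic A both equal the unique
  fixed point.\<close>
definition attr :: "int^2^2 \<Rightarrow> rp1" where
  "attr A = (THE p. \<exists>v c. v \<noteq> 0 \<and> realm A *v v = c *\<^sub>R v \<and> \<bar>c\<bar> \<ge> 1 \<and> p = pt v)"

definition repl :: "int^2^2 \<Rightarrow> rp1" where
  "repl A = (THE p. \<exists>v c. v \<noteq> 0 \<and> realm A *v v = c *\<^sub>R v \<and> \<bar>c\<bar> \<le> 1 \<and> p = pt v)"

text \<open>Linear order cutting the circle R \<union> {\<infinity>} at \<infinity>; going along it is
  counterclockwise (increasing real direction).\<close>
fun rle :: "rp1 \<Rightarrow> rp1 \<Rightarrow> bool" where
  "rle Infty _ = True"
| "rle (Fin x) Infty = False"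
| "rle (Fin x) (Fin y) = (x \<le> y)"

text \<open>Closed counterclockwise interval from a to b.\<close>
definition cinterval :: "rp1 \<Rightarrow> rp1 \<Rightarrow> rp1 set" where
  "cinterval a b = (if rle a b then {x. rle a x \<and> rle x b} else {x. rle a x \<or> rle x b})"

definition invariant_interval :: "int^2^2 \<Rightarrow> int^2^2 \<Rightarrow> rp1 \<Rightarrow> rp1 \<Rightarrow> bool" where
  "invariant_interval A B a b \<longleftrightarrow>
     mob A ` cinterval a b \<subseteq> cinterval a b \<and> mob B ` cinterval a b \<subseteq> cinterval a b"

definition Iplus_exists :: "int^2^2 \<Rightarrow> int^2^2 \<Rightarrow> bool" where
  "Iplus_exists A B \<longleftrightarrow> attr A = attr B \<or>
     invariant_interval A B (attr A) (attr B) \<or> invariant_interval A B (attr B) (attr A)"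

definition Iminus_exists :: "int^2^2 \<Rightarrow> int^2^2 \<Rightarrow> bool" where
  "Iminus_exists A B \<longleftrightarrow> repl A = repl B \<or>
     invariant_interval (sl2inv A) (sl2inv B) (repl A) (repl B) \<or>
     invariant_interval (sl2inv A) (sl2inv B) (repl B) (repl A)"

definition coherently_oriented :: "int^2^2 \<Rightarrow> int^2^2 \<Rightarrow> bool" where
  "coherently_oriented A B \<longleftrightarrow> Iplus_exists A B \<and> Iminus_exists A B"

definition well_oriented :: "int^2^2 \<Rightarrow> int^2^2 \<Rightarrow> bool" where
  "well_oriented A B \<longleftrightarrow> coherently_oriented A B \<and> \<not> coherently_oriented A (sl2inv B)"

end

theory Submission
  imports Defs
begin

text \<open>Put d k = [b^(k+1)] - [a b^k].
  Cayley-Hamilton for B gives d (k+2) = tr B * d (k+1) - d k. From tr B \<ge> 3,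
  d 0 = tr B - tr A \<le> tr B - 2 and d 1 \<ge> 1 we get d 1 \<le> d 2, and a recurrence
  with coefficient at least 2 preserves 0 \<le> d n \<le> d (n+1); hence d (k+1) \<ge> d 1 > 0.\<close>

lemma trace_mult_det1_square:
  fixes M N B :: "'a::idom^2^2"
  assumes "det B = 1"
  shows "trace (M ** (B ** (B ** N))) = trace B * trace (M ** (B ** N)) - trace (M ** N)"
proof -
  have "B$1$1 * B$2$2 - B$1$2 * B$2$1 = 1" using assms by (simp add: det_2)
  then show ?thesis unfolding trace_def matrix_matrix_mult_def
    by (simp add: sum_2) algebra
qed

lemma mono_if_second_order_recurrence:
  fixes d :: "nat \<Rightarrow> 'a::linordered_idom"
  assumes rec: "\<And>n. d (n + 2) = t * d (n + 1) - d n"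
    and "2 \<le> t" and "0 \<le> d 0" and "d 0 \<le> d 1"
  shows "mono d"
proof -
  have "0 \<le> d n \<and> d n \<le> d (Suc n)" for n
  proof (induction n)
    case 0
    then show ?case using assms by simp
  next
    case (Suc n)
    then have "0 \<le> (t - 2) * d (Suc n)" using \<open>2 \<le> t\<close> by simp
    moreover have "d (Suc (Suc n)) = (t - 2) * d (Suc n) + d (Suc n) + (d (Suc n) - d n)"
      using rec[of n] by (simp add: algebra_simps)
    ultimately show ?case using Suc by simp
  qed
  then show ?thesis by (simp add: mono_iff_le_Suc)
qed

lemma phi_Cons: "phi A B (l # w) = (case l of La \<Rightarrow> A | Lb \<Rightarrow> B) ** phi A B w"
  by (simp add: phi_def)

lemma wtr_replicate_recurrence:
  assumes "det B = 1"
  shows "wtr A B (l # replicate (k + 2) Lb)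
    = trace B * wtr A B (l # replicate (k + 1) Lb) - wtr A B (l # replicate k Lb)"
  using trace_mult_det1_square[OF assms] by (simp add: wtr_def phi_Cons numeral_2_eq_2)

theorem lemma5p4:
  fixes A B :: "int^2^2"
  assumes "A \<in> SL2Z" and "B \<in> SL2Z"
    and "A ** B \<noteq> B ** A"
    and "well_oriented A B"
    and "2 \<le> trace A" and "trace A < trace B"
    and "wtr A B [La, Lb] < wtr A B [Lb, Lb]"
  shows "\<forall>k\<ge>1. wtr A B (La # replicate k Lb) < wtr A B (replicate (k + 1) Lb)"
proof -
  define d where "d k = wtr A B (Lb # replicate k Lb) - wtr A B (La # replicate k Lb)" for k
  have "det B = 1" using assms(2) by (simp add: SL2Z_def)
  then have rec: "d (k + 2) = trace B * d (k + 1) - d k" for k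
    using wtr_replicate_recurrence[of B A La k] wtr_replicate_recurrence[of B A Lb k]
    unfolding d_def by (simp add: algebra_simps)
  have d0: "d 0 = trace B - trace A" by (simp add: d_def wtr_def phi_def)
  have d1: "1 \<le> d 1" using assms(7) by (simp add: d_def)
  have "(trace B - 1) * 1 \<le> (trace B - 1) * d 1" using d1 assms(5,6) by simp
  then have "d 1 \<le> d 2" using rec[of 0] d0 assms(5) by (simp add: algebra_simps numeral_2_eq_2)
  have "mono (\<lambda>k. d (k + 1))"
  proof (rule mono_if_second_order_recurrence[where t = "trace B"])
    show "d (n + 2 + 1) = trace B * d (n + 1 + 1) - d (n + 1)" for n
      using rec[of "n + 1"] by (simp only: ac_simps)
  qed (use assms(5,6) d1 \<open>d 1 \<le> d 2\<close> in \<open>simp_all add: numeral_2_eq_2\<close>)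
  have "0 < d k" if "1 \<le> k" for k
    using monoD[OF \<open>mono (\<lambda>k. d (k + 1))\<close>, of 0 "k - 1"] d1 that by simp
  then show ?thesis by (simp add: d_def)
qed

end
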